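(* Let $m\ge2$ be an integer and let $B_m=\mathbb{Z}^m$ with componentwise addition. Define a multiplication by $(n_1,\dots,n_m)(t_1,\dots,t_m)=(w_1,\dots,w_m)$ where, for $1\le i\le m$, \[w_i=n_i+\sum_{k=0}^{i-1}\binom{n_1}{k}t_{i-k}.\] Then $(B_m,+,\cdot)$ is a left brace with $B_m^{(3)}=B_m^{m+1}=\{0\}$ and $B_m^m\neq\{0\}$; $B_m$ is generated as a left brace by $\mathbf{b}=(1,0,\dots,0)$; and for every left brace $A$ with $A^{(3)}=A^{m+1}=\{0\}$ and every $a\in A$ there exists a unique left brace homomorphism $B_m\to A$ mapping $\mathbf{b}$ to $a$, and its image is the subbrace of $A$ generated by $a$.
   Context: A left brace $(A,+,\cdot)$ is a set $A$ with two binary operations such that $(A,+)$ is an abelian group, $(A,\cdot)$ is a group, and $a(b+c)=ab-a+ac$ for all $a,b,c\in A$. In a left brace, $a*b=-a+ab-b$. For subsets $L,M\subseteq A$, $L*M$ is the subgroup of $(A,+)$ generated by $\{l*m\mid l\in L,m\in M\}$. Set $A^{(1)}=A$, $A^{(r+1)}=A^{(r)}*A$, and $A^1=A$, $A^{r+1}=A*A^r$ for $r\ge1$. A subbrace is a subset that is a subgroup of both $(A,+)$ and $(A,\cdot)$; the subbrace generated by an element is the intersection of all subbraces containing it. A left brace homomorphism is a map that is a homomorphism for both operations. Generalised binomial coefficients: for $n\in\mathbb{Z}$ and integer $k\ge0$, $\binom{n}{0}=1$ and $\binom{n}{k}=\frac{n(n-1)\cdots(n-k+1)}{k!}$ for $k>0$.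 *)

theory Defs
  imports "HOL-Algebra.Algebra"
begin

text \<open>A left brace is represented by a ring record R: carrier R, addition \<oplus>, zero \<zero>
  (the abelian group (A,+)), and multiplication \<otimes>, one \<one> (the group (A,\<cdot>)).\<close>

definition left_brace :: "'a ring \<Rightarrow> bool" where
  "left_brace R \<longleftrightarrow> abelian_group R \<and> group R \<and>
     (\<forall>a\<in>carrier R. \<forall>b\<in>carrier R. \<forall>c\<in>carrier R.
        a \<otimes>\<^bsub>R\<^esub> (b \<oplus>\<^bsub>R\<^esub> c) = ((a \<otimes>\<^bsub>R\<^esub> b) \<ominus>\<^bsub>R\<^esub> a) \<oplus>\<^bsub>R\<^esub> (a \<otimes>\<^bsub>R\<^esub> c))"

definition brace_star :: "'a ring \<Rightarrow> 'a \<Rightarrow> 'a \<Rightarrow> 'a" where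
  "brace_star R a b = ((\<ominus>\<^bsub>R\<^esub> a) \<oplus>\<^bsub>R\<^esub> (a \<otimes>\<^bsub>R\<^esub> b)) \<ominus>\<^bsub>R\<^esub> b"

definition star_set :: "'a ring \<Rightarrow> 'a set \<Rightarrow> 'a set \<Rightarrow> 'a set" where
  "star_set R L M = generate (add_monoid R) {brace_star R l m | l m. l \<in> L \<and> m \<in> M}"

primrec right_aux :: "'a ring \<Rightarrow> nat \<Rightarrow> 'a set" where
  "right_aux R 0 = carrier R"
| "right_aux R (Suc k) = star_set R (right_aux R k) (carrier R)"

primrec left_aux :: "'a ring \<Rightarrow> nat \<Rightarrow> 'a set" where
  "left_aux R 0 = carrier R"
| "left_aux R (Suc k) = star_set R (carrier R) (left_aux R k)"

text \<open>A^(r) and A^r for r \<ge> 1\<close>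
definition brace_right :: "'a ring \<Rightarrow> nat \<Rightarrow> 'a set" where
  "brace_right R r = right_aux R (r - 1)"

definition brace_left :: "'a ring \<Rightarrow> nat \<Rightarrow> 'a set" where
  "brace_left R r = left_aux R (r - 1)"

definition subbrace :: "'a ring \<Rightarrow> 'a set \<Rightarrow> bool" where
  "subbrace R S \<longleftrightarrow> subgroup S (add_monoid R) \<and> subgroup S R"

definition subbrace_gen :: "'a ring \<Rightarrow> 'a \<Rightarrow> 'a set" where
  "subbrace_gen R a = \<Inter>{S. subbrace R S \<and> a \<in> S}"

definition brace_hom :: "'a ring \<Rightarrow> 'b ring \<Rightarrow> ('a \<Rightarrow> 'b) \<Rightarrow> bool" where
  "brace_hom R S f \<longleftrightarrow> f ` carrier R \<subseteq> carrier S \<and>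
     (\<forall>x\<in>carrier R. \<forall>y\<in>carrier R.
        f (x \<oplus>\<^bsub>R\<^esub> y) = f x \<oplus>\<^bsub>S\<^esub> f y \<and> f (x \<otimes>\<^bsub>R\<^esub> y) = f x \<otimes>\<^bsub>S\<^esub> f y)"

text \<open>Generalised binomial coefficient on integers: n(n-1)...(n-k+1)/k!
  (the division is exact; this is the library gchoose on int, whose syntax is
  restricted to field_char_0 in this theory context).\<close>
definition gen_binom :: "int \<Rightarrow> nat \<Rightarrow> int" where
  "gen_binom n k = (\<Prod>i=0..<k. n - int i) div fact k"

text \<open>The brace B_m on Z^m, represented as int lists of length m; list index i-1
  corresponds to coordinate i.\<close>
definition Bm_mul :: "nat \<Rightarrow> int list \<Rightarrow> int list \<Rightarrow> int list" where
  "Bm_mul m xs ys = map (\<lambda>i. xs ! i + (\<Sum>k\<le>i. gen_binom (xs ! 0) k * ys ! (i - k))) [0..<m]"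

definition Bm :: "nat \<Rightarrow> int list ring" where
  "Bm m = \<lparr> carrier = {xs. length xs = m}, monoid.mult = Bm_mul m,
            one = replicate m 0, ring.zero = replicate m 0,
            ring.add = (\<lambda>x y. map2 (+) x y) \<rparr>"

definition bvec :: "nat \<Rightarrow> int list" where
  "bvec m = 1 # replicate (m - 1) 0"

end

theory Submission
  imports Defs "HOL-Computational_Algebra.Formal_Power_Series"
begin

text \<open>
  Read \<open>x \<in> B_m\<close> as the power series \<open>x_1 + x_2 X + \<dots> + x_m X^(m-1)\<close> modulo \<open>X^m\<close>.
  Then \<open>x y = x + (1 + X)^x_1 y\<close>, so \<open>\<lambda>_x\<close> is multiplication by \<open>(1 + X)^x_1\<close>, and
  Vandermonde's identity \<open>(1 + X)^a (1 + X)^b = (1 + X)^(a+b)\<close> makes \<open>B_m\<close> a left brace.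
  As \<open>x * y = ((1 + X)^x_1 - 1) y\<close> raises the order in \<open>X\<close>, \<open>B_m^k\<close> consists of the
  vectors whose first \<open>k - 1\<close> coordinates vanish, and \<open>B_m^(2)\<close> of vectors with \<open>x_1 = 0\<close>,
  which act trivially. Since \<open>b * e_i = e_(i+1)\<close>, the element \<open>b\<close> generates \<open>B_m\<close>.

  Given \<open>a \<in> A\<close>, send \<open>e_i\<close> to \<open>a_i\<close>, where \<open>a_1 = a\<close> and \<open>a_(i+1) = a * a_i\<close>; this map \<open>f\<close>
  is additive by construction. When \<open>A^(3) = 0\<close> every \<open>\<lambda>_(x * y)\<close> is the identity, so
  \<open>x \<mapsto> \<lambda>_x\<close> is additive and \<open>\<lambda>_f(x) = (\<lambda>_a)^x_1\<close>. On the \<open>a_i\<close>, \<open>\<lambda>_a\<close> acts as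
  multiplication by \<open>1 + X\<close>, because \<open>a_(m+1) = 0\<close> by \<open>A^(m+1) = 0\<close>; hence \<open>f\<close> is also
  multiplicative. Uniqueness and the description of the image hold because a subbrace of
  \<open>B_m\<close> containing \<open>b\<close> is all of \<open>B_m\<close>.
\<close>

section \<open>Generalised binomial coefficients\<close>

lemma gbinomial_of_int_is_int:
  "\<exists>z::int. (of_int n :: 'a::field_char_0) gchoose k = of_int z"
proof (cases "n \<ge> 0")
  case True
  then obtain N where "n = int N" by (metis nonneg_int_cases)
  then have "(of_int n :: 'a) gchoose k = of_int (int (N choose k))"
    by (simp add: binomial_gbinomial)
  then show ?thesis ..
next
  case False
  have e: "of_nat k - (of_int n :: 'a) - 1 = of_nat (nat (int k - n - 1))"
    using False by simp
  have "(of_int n :: 'a) gchoose k = (- 1) ^ k * (of_nat k - of_int n - 1 gchoose k)"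
    by (rule gbinomial_negated_upper)
  also have "\<dots> = of_int ((- 1) ^ k * int (nat (int k - n - 1) choose k))"
    by (simp add: e binomial_gbinomial[symmetric])
  finally show ?thesis ..
qed
lemma of_int_gen_binom: "(of_int (gen_binom n k) :: 'a::field_char_0) = of_int n gchoose k"
proof -
  obtain z where z: "(of_int n :: 'a) gchoose k = of_int z"
    using gbinomial_of_int_is_int by blast
  have "(of_int (\<Prod>i=0..<k. n - int i) :: 'a) = fact k * (of_int n gchoose k)"
    by (simp add: gbinomial_mult_fact)
  then have "(\<Prod>i=0..<k. n - int i) = fact k * z"
    unfolding z by (metis of_int_eq_iff of_int_of_nat_eq of_nat_fact of_int_mult)
  then show ?thesis
    by (simp add: gen_binom_def z)
qed

lemma gen_binom_Vandermonde:
  "(\<Sum>j\<le>i. gen_binom a j * gen_binom b (i - j)) = gen_binom (a + b) i"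
proof -
  have "(of_int (\<Sum>j\<le>i. gen_binom a j * gen_binom b (i - j)) :: rat) = of_int (gen_binom (a + b) i)"
    by (simp add: of_int_gen_binom gbinomial_Vandermonde atMost_atLeast0)
  then show ?thesis by (simp only: of_int_eq_iff)
qed

lemma gen_binom_0 [simp]: "gen_binom n 0 = 1"
  by (simp add: gen_binom_def)

lemma gen_binom_zero_Suc [simp]: "gen_binom 0 (Suc k) = 0"
  using of_int_gen_binom[of 0 "Suc k", where 'a=rat] by simp

lemma gen_binom_1: "gen_binom 1 k = (if k \<le> 1 then 1 else 0)"
proof -
  have "(of_int (gen_binom 1 k) :: rat) = (if k \<le> 1 then 1 else 0)"
    unfolding of_int_gen_binom using binomial_gbinomial[of 1 k, where 'a=rat]
    by (cases k) (auto simp: binomial_eq_0)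
  then show ?thesis by (simp split: if_splits)
qed

section \<open>Generalities on left braces\<close>

lemma zero_in_star_set: "\<zero>\<^bsub>R\<^esub> \<in> star_set R L M"
  using generate.one[of "add_monoid R"] by (simp add: star_set_def)

lemma star_in_star_set: "l \<in> L \<Longrightarrow> y \<in> M \<Longrightarrow> brace_star R l y \<in> star_set R L M"
  by (auto simp: star_set_def intro: generate.incl)

lemma star_set_subset:
  assumes "abelian_group R" "subgroup H (add_monoid R)"
    and "\<And>l y. l \<in> L \<Longrightarrow> y \<in> M \<Longrightarrow> brace_star R l y \<in> H"
  shows "star_set R L M \<subseteq> H"
  unfolding star_set_def
  by (rule group.generate_subgroup_incl[OF abelian_group.a_group]) (use assms in auto)

lemma subbrace_star:
  assumes S: "subbrace R S" and "x \<in> S" "y \<in> S" shows "brace_star R x y \<in> S"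
proof -
  have add: "subgroup S (add_monoid R)" and mult: "subgroup S R"
    using S by (simp_all add: subbrace_def)
  have "\<And>u v. u \<in> S \<Longrightarrow> v \<in> S \<Longrightarrow> u \<oplus>\<^bsub>R\<^esub> v \<in> S"
    using subgroup.m_closed[OF add] by simp
  moreover have "\<And>u. u \<in> S \<Longrightarrow> \<ominus>\<^bsub>R\<^esub> u \<in> S"
    using subgroup.m_inv_closed[OF add] by (simp add: a_inv_def)
  ultimately show ?thesis
    using assms(2,3) subgroup.m_closed[OF mult] by (simp add: brace_star_def a_minus_def)
qed

lemma left_brace_groups:
  assumes "left_brace R" shows "group (add_monoid R)" "group R"
  using assms abelian_group.a_group unfolding left_brace_def by blast+

lemma subbrace_carrier:
  assumes "left_brace R" shows "subbrace R (carrier R)"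
proof -
  from group.subgroup_self[OF left_brace_groups(1)[OF assms]]
    group.subgroup_self[OF left_brace_groups(2)[OF assms]] show ?thesis
    by (simp add: subbrace_def)
qed

lemma subbrace_gen_eqI:
  assumes "subbrace R T" "a \<in> T" "\<And>S. subbrace R S \<Longrightarrow> a \<in> S \<Longrightarrow> T \<subseteq> S"
  shows "subbrace_gen R a = T"
  using assms unfolding subbrace_gen_def by blast

lemma (in group_hom) subgroup_vimage:
  assumes "subgroup T H" shows "subgroup (carrier G \<inter> h -` T) G"
proof (rule G.subgroupI)
  show "carrier G \<inter> h -` T \<noteq> {}"
    using subgroup.one_closed[OF assms] by (auto intro!: exI[of _ \<one>])
qed (use assms in \<open>auto simp: subgroup.m_closed subgroup.m_inv_closed\<close>)

lemma group_hom_equalizer_subgroup: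
  assumes f: "group_hom G H f" and g: "group_hom G H g"
  shows "subgroup {x \<in> carrier G. f x = g x} G"
proof -
  interpret f: group_hom G H f by fact
  interpret g: group_hom G H g by fact
  show ?thesis by (rule f.G.subgroupI) auto
qed

lemma brace_hom_group_hom:
  assumes "left_brace R" "left_brace S" "brace_hom R S f"
  shows "group_hom R S f" "group_hom (add_monoid R) (add_monoid S) f"
proof -
  have "group R" "group S" "group (add_monoid R)" "group (add_monoid S)"
    using left_brace_groups assms(1,2) by blast+
  then show "group_hom R S f" "group_hom (add_monoid R) (add_monoid S) f"
    using assms(3) by (auto simp: brace_hom_def group_hom_def group_hom_axioms_def hom_def)
qed

lemma brace_hom_image_subbrace:
  assumes "left_brace R" "left_brace S" "brace_hom R S f"
  shows "subbrace S (f ` carrier R)"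
  using group_hom.img_is_subgroup[OF brace_hom_group_hom(1)[OF assms]]
    group_hom.img_is_subgroup[OF brace_hom_group_hom(2)[OF assms]]
  by (simp add: subbrace_def)

lemma brace_hom_vimage_subbrace:
  assumes "left_brace R" "left_brace S" "brace_hom R S f" "subbrace S T"
  shows "subbrace R (carrier R \<inter> f -` T)"
  using group_hom.subgroup_vimage[OF brace_hom_group_hom(1)[OF assms(1-3)]]
    group_hom.subgroup_vimage[OF brace_hom_group_hom(2)[OF assms(1-3)]] assms(4)
  by (simp add: subbrace_def)

lemma brace_hom_equalizer_subbrace:
  assumes "left_brace R" "left_brace S" "brace_hom R S f" "brace_hom R S g"
  shows "subbrace R {x \<in> carrier R. f x = g x}"
  using group_hom_equalizer_subgroup[OF brace_hom_group_hom(1)[OF assms(1-3)]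
      brace_hom_group_hom(1)[OF assms(1,2,4)]]
    group_hom_equalizer_subgroup[OF brace_hom_group_hom(2)[OF assms(1-3)]
      brace_hom_group_hom(2)[OF assms(1,2,4)]]
  by (simp add: subbrace_def)

definition brace_lambda :: "'a ring \<Rightarrow> 'a \<Rightarrow> 'a \<Rightarrow> 'a" where
  "brace_lambda A x y = \<ominus>\<^bsub>A\<^esub> x \<oplus>\<^bsub>A\<^esub> x \<otimes>\<^bsub>A\<^esub> y"

lemma brace_star_eq_lambda: "brace_star A x y = brace_lambda A x y \<ominus>\<^bsub>A\<^esub> y"
  by (simp add: brace_star_def brace_lambda_def)

lemma (in abelian_group) a_inv_zero [simp]: "\<ominus> \<zero> = \<zero>"
  by (rule minus_equality) simp_all

locale brace = abelian_group A + group A for A :: "'a ring" (structure) +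
  assumes distrib: "\<And>a b c. a \<in> carrier A \<Longrightarrow> b \<in> carrier A \<Longrightarrow> c \<in> carrier A \<Longrightarrow>
     a \<otimes> (b \<oplus> c) = a \<otimes> b \<ominus> a \<oplus> a \<otimes> c"

lemma left_brace_imp_brace: "left_brace A \<Longrightarrow> brace A"
  unfolding left_brace_def brace_def brace_axioms_def by blast

context brace
begin

lemma one_eq_zero: "\<one> = \<zero>"
proof -
  have "\<one> \<otimes> (\<zero> \<oplus> \<zero>) = \<one> \<otimes> \<zero> \<ominus> \<one> \<oplus> \<one> \<otimes> \<zero>"
    by (rule distrib) auto
  then have "\<zero> = \<ominus> \<one>" by (simp add: a_minus_def)
  then have "\<ominus> \<zero> = \<one>" using minus_minus[of \<one>] by simp
  then show ?thesis by simp
qed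

lemma lambda_closed [simp]: "x \<in> carrier A \<Longrightarrow> y \<in> carrier A \<Longrightarrow> brace_lambda A x y \<in> carrier A"
  by (simp add: brace_lambda_def)

lemma star_closed [simp]: "x \<in> carrier A \<Longrightarrow> y \<in> carrier A \<Longrightarrow> brace_star A x y \<in> carrier A"
  by (simp add: brace_star_eq_lambda)

lemma mult_eq_add_lambda: "x \<in> carrier A \<Longrightarrow> y \<in> carrier A \<Longrightarrow> x \<otimes> y = x \<oplus> brace_lambda A x y"
  by (simp add: brace_lambda_def a_assoc[symmetric] r_neg)

lemma lambda_add: "x \<in> carrier A \<Longrightarrow> y \<in> carrier A \<Longrightarrow> z \<in> carrier A \<Longrightarrow>
   brace_lambda A x (y \<oplus> z) = brace_lambda A x y \<oplus> brace_lambda A x z"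
  by (simp add: brace_lambda_def distrib a_minus_def a_ac)

lemma lambda_zero_right: "x \<in> carrier A \<Longrightarrow> brace_lambda A x \<zero> = \<zero>"
  using r_one[of x] by (simp add: brace_lambda_def l_neg flip: one_eq_zero)

lemma lambda_zero_left: "z \<in> carrier A \<Longrightarrow> brace_lambda A \<zero> z = z"
  using l_one[of z] by (simp add: brace_lambda_def one_eq_zero)

lemma lambda_mult: "x \<in> carrier A \<Longrightarrow> y \<in> carrier A \<Longrightarrow> z \<in> carrier A \<Longrightarrow>
   brace_lambda A x (brace_lambda A y z) = brace_lambda A (x \<otimes> y) z"
proof -
  assume xyz: "x \<in> carrier A" "y \<in> carrier A" "z \<in> carrier A"
  have neg: "brace_lambda A x (\<ominus> y) = \<ominus> brace_lambda A x y"
    using lambda_add[of x y "\<ominus> y"] xyz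
    by (intro minus_equality[symmetric]) (simp_all add: r_neg lambda_zero_right a_comm)
  have "brace_lambda A x (brace_lambda A y z) = brace_lambda A x (\<ominus> y) \<oplus> brace_lambda A x (y \<otimes> z)"
    using xyz by (simp add: brace_lambda_def[of A y] lambda_add)
  also have "\<dots> = \<ominus> (\<ominus> x \<oplus> x \<otimes> y) \<oplus> (\<ominus> x \<oplus> x \<otimes> (y \<otimes> z))"
    using xyz by (simp add: neg) (simp add: brace_lambda_def)
  also have "\<dots> = brace_lambda A (x \<otimes> y) z"
    using xyz by (simp add: brace_lambda_def minus_add minus_minus m_assoc a_ac r_neg1 r_neg2)
  finally show ?thesis .
qed

lemma lambda_hom: "x \<in> carrier A \<Longrightarrow> brace_lambda A x \<in> hom (add_monoid A) (add_monoid A)"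
  by (auto simp: hom_def lambda_add)

lemma lambda_int_pow: "x \<in> carrier A \<Longrightarrow> y \<in> carrier A \<Longrightarrow>
   brace_lambda A x (add_pow A (c::int) y) = add_pow A c (brace_lambda A x y)"
  using hom_int_pow[OF lambda_hom, of x y c] a_group by (simp add: add_pow_def)

end

locale brace_right_nil2 = brace +
  assumes brace_right_3: "brace_right A 3 = {\<zero>}"
begin

lemma lambda_star_eq_id:
  assumes "x \<in> carrier A" "y \<in> carrier A" "z \<in> carrier A"
  shows "brace_lambda A (brace_star A x y) z = z"
proof -
  have "brace_star A x y \<in> right_aux A 1"
    using assms by (simp add: star_in_star_set)
  then have "brace_star A (brace_star A x y) z \<in> right_aux A 2"
    using assms by (simp add: numeral_2_eq_2 star_in_star_set)
  then have "brace_lambda A (brace_star A x y) z \<oplus> \<ominus> z = \<zero>"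
    using brace_right_3
    by (simp add: brace_right_def numeral_3_eq_3 numeral_2_eq_2 brace_star_eq_lambda a_minus_def)
  then show ?thesis
    using add.inv_solve_right'[of \<zero> "brace_lambda A (brace_star A x y) z" z] assms by simp
qed

text \<open>Because \<open>x y = (x + y) + x * y = (x * y) (x + y)\<close> and \<open>\<lambda>_(x * y)\<close> is the identity.\<close>

lemma lambda_add_left:
  assumes "x \<in> carrier A" "y \<in> carrier A" "z \<in> carrier A"
  shows "brace_lambda A (x \<oplus> y) z = brace_lambda A x (brace_lambda A y z)"
proof -
  let ?w = "brace_star A x y"
  have "x \<otimes> y = (x \<oplus> y) \<oplus> ?w"
    using assms by (simp add: mult_eq_add_lambda brace_star_eq_lambda a_minus_def a_ac r_neg1 r_neg2)
  also have "\<dots> = ?w \<otimes> (x \<oplus> y)"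
    using assms by (simp add: mult_eq_add_lambda lambda_star_eq_id a_comm)
  finally have "brace_lambda A x (brace_lambda A y z) = brace_lambda A ?w (brace_lambda A (x \<oplus> y) z)"
    using assms by (simp add: lambda_mult)
  then show ?thesis
    using assms by (simp add: lambda_star_eq_id)
qed

lemma lambda_int_pow_eq_id:
  assumes "w \<in> carrier A" "\<And>z. z \<in> carrier A \<Longrightarrow> brace_lambda A w z = z" "z \<in> carrier A"
  shows "brace_lambda A (add_pow A (c::int) w) z = z"
proof (induction c rule: int_induct[where k=0])
  case base then show ?case using assms by (simp add: add_pow_def lambda_zero_left)
next
  case (step1 c)
  have "add_pow A (c + 1) w = add_pow A c w \<oplus> w"
    using assms add.int_pow_mult[of w c 1] by simp
  then show ?case using step1 assms by (simp add: lambda_add_left)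
next
  case (step2 c)
  have "add_pow A c w = add_pow A (c - 1) w \<oplus> w"
    using assms add.int_pow_mult[of w "c - 1" 1] by simp
  then show ?case using step2 assms by (simp add: lambda_add_left)
qed

end

section \<open>The left brace \<open>B\<^sub>m\<close>\<close>

text \<open>\<open>binom_fps k\<close> is \<open>(1 + X)^k\<close> for \<open>k \<in> \<int>\<close>; \<open>binom_mult m k\<close> multiplies a coefficient
  vector by it modulo \<open>X^m\<close>.\<close>

definition binom_fps :: "int \<Rightarrow> int fps" where
  "binom_fps k = Abs_fps (gen_binom k)"

definition list_fps :: "int list \<Rightarrow> int fps" where
  "list_fps t = Abs_fps (\<lambda>i. if i < length t then t ! i else 0)"

definition binom_mult :: "nat \<Rightarrow> int \<Rightarrow> int list \<Rightarrow> int list" where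
  "binom_mult m k t = map (fps_nth (binom_fps k * list_fps t)) [0..<m]"

lemma binom_fps_mult: "binom_fps a * binom_fps b = binom_fps (a + b)"
  by (rule fps_ext) (simp add: binom_fps_def fps_mult_nth gen_binom_Vandermonde atLeast0AtMost)

lemma binom_fps_0: "binom_fps 0 = 1"
proof (rule fps_ext)
  fix n show "fps_nth (binom_fps 0) n = fps_nth 1 n"
    by (cases n) (simp_all add: binom_fps_def)
qed

lemma binom_fps_1: "binom_fps 1 = 1 + fps_X"
  by (rule fps_ext) (auto simp: binom_fps_def gen_binom_1 fps_one_nth fps_X_def)

lemma length_binom_mult [simp]: "length (binom_mult m k t) = m"
  by (simp add: binom_mult_def)

lemma nth_binom_mult: "i < m \<Longrightarrow> binom_mult m k t ! i = fps_nth (binom_fps k * list_fps t) i"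
  by (simp add: binom_mult_def)

lemma nth_binom_mult_sum:
  "length t = m \<Longrightarrow> i < m \<Longrightarrow> binom_mult m k t ! i = (\<Sum>j\<le>i. gen_binom k j * t ! (i - j))"
  by (auto simp: nth_binom_mult fps_mult_nth binom_fps_def list_fps_def atLeast0AtMost
      intro!: sum.cong)

lemma binom_mult_binom_mult: "binom_mult m k (binom_mult m l t) = binom_mult m (k + l) t"
proof (rule nth_equalityI)
  fix i assume "i < length (binom_mult m k (binom_mult m l t))"
  then have i: "i < m" by simp
  have "fps_nth (binom_fps k * list_fps (binom_mult m l t)) i
      = fps_nth (binom_fps k * (binom_fps l * list_fps t)) i"
    using i by (auto simp: fps_mult_nth list_fps_def nth_binom_mult intro!: sum.cong)
  then show "binom_mult m k (binom_mult m l t) ! i = binom_mult m (k + l) t ! i"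
    using i by (simp add: nth_binom_mult mult.assoc[symmetric] binom_fps_mult)
qed simp

lemma binom_mult_0: "length t = m \<Longrightarrow> binom_mult m 0 t = t"
  by (rule nth_equalityI) (auto simp: nth_binom_mult binom_fps_0 list_fps_def)

lemma nth_binom_mult_1:
  "length t = m \<Longrightarrow> i < m \<Longrightarrow> binom_mult m 1 t ! i = t ! i + (if i = 0 then 0 else t ! (i - 1))"
  by (auto simp: nth_binom_mult binom_fps_1 list_fps_def distrib_right)

lemma hd_binom_mult: "0 < m \<Longrightarrow> length t = m \<Longrightarrow> binom_mult m k t ! 0 = t ! 0"
  by (simp add: nth_binom_mult fps_mult_nth binom_fps_def list_fps_def)

lemma binom_mult_add:
  "length x = m \<Longrightarrow> length y = m \<Longrightarrow> binom_mult m k (map2 (+) x y) = map2 (+) (binom_mult m k x) (binom_mult m k y)"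
proof -
  assume "length x = m" "length y = m"
  then have "list_fps (map2 (+) x y) = list_fps x + list_fps y"
    by (intro fps_ext) (simp add: list_fps_def)
  then show ?thesis
    by (intro nth_equalityI) (auto simp: nth_binom_mult distrib_left)
qed

lemma Bm_mul_eq:
  "length x = m \<Longrightarrow> length y = m \<Longrightarrow> Bm_mul m x y = map2 (+) x (binom_mult m (x ! 0) y)"
  by (rule nth_equalityI) (auto simp: Bm_mul_def nth_binom_mult_sum)

lemma Bm_simps [simp]:
  "carrier (Bm m) = {xs. length xs = m}"
  "monoid.mult (Bm m) = Bm_mul m"
  "one (Bm m) = replicate m 0"
  "ring.zero (Bm m) = replicate m 0"
  "ring.add (Bm m) = map2 (+)"
  by (simp_all add: Bm_def)

lemma length_Bm_mul [simp]: "length (Bm_mul m x y) = m"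
  by (simp add: Bm_mul_def)

lemma abelian_group_Bm: "abelian_group (Bm m)"
proof (rule abelian_groupI, goal_cases)
  case (6 x)
  then show ?case by (intro bexI[of _ "map uminus x"]) (auto intro!: nth_equalityI)
qed (auto intro!: nth_equalityI)

lemma Bm_a_inv: "length x = m \<Longrightarrow> \<ominus>\<^bsub>Bm m\<^esub> x = map uminus x"
  by (rule abelian_group.minus_equality[OF abelian_group_Bm]) (auto intro!: nth_equalityI)

lemma group_Bm:
  assumes m: "0 < m" shows "group (Bm m)"
proof (rule groupI, goal_cases)
  case (3 x y z)
  then have l: "length x = m" "length y = m" "length z = m" by auto
  have "Bm_mul m x y ! 0 = x ! 0 + y ! 0"
    using l m by (simp add: Bm_mul_eq hd_binom_mult)
  then have "Bm_mul m (Bm_mul m x y) z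
      = map2 (+) (map2 (+) x (binom_mult m (x ! 0) y)) (binom_mult m (x ! 0 + y ! 0) z)"
    using l by (simp add: Bm_mul_eq)
  also have "\<dots> = Bm_mul m x (Bm_mul m y z)"
    using l by (simp add: Bm_mul_eq binom_mult_add binom_mult_binom_mult) (rule nth_equalityI, simp_all)
  finally show ?case by simp
next
  case (4 x)
  then show ?case using m by (simp add: Bm_mul_eq binom_mult_0) (auto intro!: nth_equalityI)
next
  case (5 x)
  then have l: "length x = m" by simp
  let ?y = "map uminus (binom_mult m (- (x ! 0)) x)"
  have "?y ! 0 = - (x ! 0)"
    using m l by (simp add: hd_binom_mult)
  then show ?case
    using l m by (intro bexI[of _ ?y]) (auto simp: Bm_mul_eq intro!: nth_equalityI)
qed auto

lemma left_brace_Bm: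
  assumes m: "0 < m" shows "left_brace (Bm m)"
  unfolding left_brace_def
proof (intro conjI abelian_group_Bm group_Bm[OF m] ballI)
  fix a b c assume "a \<in> carrier (Bm m)" "b \<in> carrier (Bm m)" "c \<in> carrier (Bm m)"
  then have l: "length a = m" "length b = m" "length c = m" by auto
  then show "a \<otimes>\<^bsub>Bm m\<^esub> (b \<oplus>\<^bsub>Bm m\<^esub> c) = a \<otimes>\<^bsub>Bm m\<^esub> b \<ominus>\<^bsub>Bm m\<^esub> a \<oplus>\<^bsub>Bm m\<^esub> a \<otimes>\<^bsub>Bm m\<^esub> c"
    by (simp add: a_minus_def Bm_a_inv Bm_mul_eq binom_mult_add) (rule nth_equalityI, simp_all)
qed

section \<open>The left and right series of \<open>B\<^sub>m\<close>\<close>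

definition unit_vec :: "nat \<Rightarrow> nat \<Rightarrow> int list" where
  "unit_vec m j = map (\<lambda>i. if i = j then 1 else 0) [0..<m]"

definition vanishing_below :: "nat \<Rightarrow> nat \<Rightarrow> int list set" where
  "vanishing_below m j = {xs. length xs = m \<and> (\<forall>i<min j m. xs ! i = 0)}"

lemma length_unit_vec [simp]: "length (unit_vec m j) = m"
  by (simp add: unit_vec_def)

lemma nth_unit_vec [simp]: "i < m \<Longrightarrow> unit_vec m j ! i = (if i = j then 1 else 0)"
  by (simp add: unit_vec_def)

lemma length_bvec [simp]: "0 < m \<Longrightarrow> length (bvec m) = m"
  by (simp add: bvec_def)

lemma hd_bvec [simp]: "bvec m ! 0 = 1"
  by (simp add: bvec_def)

lemma unit_vec_0: "0 < m \<Longrightarrow> unit_vec m 0 = bvec m"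
  by (rule nth_equalityI) (auto simp: bvec_def nth_Cons split: nat.splits)

lemma nth_brace_star_Bm:
  "length x = m \<Longrightarrow> length y = m \<Longrightarrow> i < m \<Longrightarrow>
   brace_star (Bm m) x y ! i = binom_mult m (x ! 0) y ! i - y ! i"
  by (simp add: brace_star_def a_minus_def Bm_a_inv Bm_mul_eq)

lemma length_brace_star_Bm [simp]:
  "length x = m \<Longrightarrow> length y = m \<Longrightarrow> length (brace_star (Bm m) x y) = m"
  by (simp add: brace_star_def a_minus_def Bm_a_inv Bm_mul_eq)

lemma brace_star_Bm_eq_replicate:
  "length x = m \<Longrightarrow> length y = m \<Longrightarrow> x ! 0 = 0 \<Longrightarrow> brace_star (Bm m) x y = replicate m 0"
  by (rule nth_equalityI) (simp_all add: nth_brace_star_Bm binom_mult_0)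

lemma brace_star_bvec_unit_vec:
  "0 < m \<Longrightarrow> brace_star (Bm m) (bvec m) (unit_vec m j) = unit_vec m (Suc j)"
  by (rule nth_equalityI) (auto simp: nth_brace_star_Bm nth_binom_mult_1)

lemma brace_star_Bm_vanishing_below:
  assumes "length x = m" and y: "y \<in> vanishing_below m j"
  shows "brace_star (Bm m) x y \<in> vanishing_below m (Suc j)"
proof -
  have l: "length y = m" and z: "\<And>i. i < min j m \<Longrightarrow> y ! i = 0"
    using y by (auto simp: vanishing_below_def)
  have "binom_mult m (x ! 0) y ! i = y ! i" if i: "i < min (Suc j) m" for i
  proof -
    have "y ! (i - k) = 0" if "0 < k" "k \<le> i" for k
      using i that by (intro z) linarith
    then have "(\<Sum>k\<le>i. gen_binom (x ! 0) k * y ! (i - k)) = (\<Sum>k\<in>{0}. gen_binom (x ! 0) k * y ! (i - k))"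
      by (intro sum.mono_neutral_right) auto
    then show ?thesis using i l by (simp add: nth_binom_mult_sum)
  qed
  then show ?thesis
    using assms l by (simp add: vanishing_below_def nth_brace_star_Bm)
qed

lemma vanishing_below_0: "vanishing_below m 0 = carrier (Bm m)"
  by (auto simp: vanishing_below_def)

lemma vanishing_below_top: "vanishing_below m m = {replicate m 0}"
  by (auto simp: vanishing_below_def intro: nth_equalityI)

lemma subgroup_vanishing_below: "subgroup (vanishing_below m j) (add_monoid (Bm m))"
proof (rule group.subgroupI[OF abelian_group.a_group[OF abelian_group_Bm]])
  fix x assume "x \<in> vanishing_below m j"
  then show "inv\<^bsub>add_monoid (Bm m)\<^esub> x \<in> vanishing_below m j"
    unfolding a_inv_def[symmetric] by (simp add: Bm_a_inv vanishing_below_def)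
qed (auto simp: vanishing_below_def intro!: exI[of _ "replicate m 0"])

lemma left_aux_Bm_subset: "left_aux (Bm m) k \<subseteq> vanishing_below m k"
proof (induction k)
  case 0 then show ?case by (simp add: vanishing_below_0)
next
  case (Suc k) then show ?case
    by (simp, intro star_set_subset[OF abelian_group_Bm subgroup_vanishing_below])
      (auto intro: brace_star_Bm_vanishing_below)
qed

lemma unit_vec_in_left_aux:
  "0 < m \<Longrightarrow> unit_vec m k \<in> left_aux (Bm m) k"
proof (induction k)
  case 0 then show ?case by simp
next
  case (Suc k)
  then have "brace_star (Bm m) (bvec m) (unit_vec m k) \<in> left_aux (Bm m) (Suc k)"
    by (simp add: star_in_star_set)
  then show ?case using Suc.prems by (simp add: brace_star_bvec_unit_vec)
qed

lemma brace_left_Bm_top: "brace_left (Bm m) (m + 1) = {\<zero>\<^bsub>Bm m\<^esub>}"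
  using left_aux_Bm_subset[of m m] zero_in_star_set[of "Bm m"]
  by (cases m) (auto simp: brace_left_def vanishing_below_top)

lemma brace_left_Bm_ne:
  assumes "0 < m" shows "brace_left (Bm m) m \<noteq> {\<zero>\<^bsub>Bm m\<^esub>}"
proof
  assume "brace_left (Bm m) m = {\<zero>\<^bsub>Bm m\<^esub>}"
  then have "unit_vec m (m - 1) = replicate m 0"
    using unit_vec_in_left_aux[OF assms, of "m - 1"] by (simp add: brace_left_def)
  then have "unit_vec m (m - 1) ! (m - 1) = replicate m 0 ! (m - 1)" by simp
  then show False using assms by simp
qed

lemma brace_right_Bm_3:
  assumes "0 < m" shows "brace_right (Bm m) 3 = {\<zero>\<^bsub>Bm m\<^esub>}"
proof -
  have "right_aux (Bm m) 1 \<subseteq> vanishing_below m 1"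
    by (simp, intro star_set_subset[OF abelian_group_Bm subgroup_vanishing_below])
      (use brace_star_Bm_vanishing_below[of _ m _ 0] in \<open>auto simp: vanishing_below_0\<close>)
  then have "right_aux (Bm m) 2 \<subseteq> vanishing_below m m"
    unfolding numeral_2_eq_2 using assms
    by (simp, intro star_set_subset[OF abelian_group_Bm subgroup_vanishing_below])
      (auto simp: vanishing_below_top vanishing_below_def brace_star_Bm_eq_replicate)
  then show ?thesis
    using zero_in_star_set[of "Bm m"]
    by (auto simp: brace_right_def numeral_3_eq_3 numeral_2_eq_2 vanishing_below_top)
qed

section \<open>\<open>B\<^sub>m\<close> is generated by \<open>b\<close>\<close>

lemma Bm_nat_pow: "length x = m \<Longrightarrow> x [^]\<^bsub>add_monoid (Bm m)\<^esub> (n::nat) = map ((*) (int n)) x"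
proof (induction n)
  case 0 then show ?case by (intro nth_equalityI) simp_all
next
  case (Suc n) then show ?case by (intro nth_equalityI) (simp_all add: distrib_right)
qed

lemma Bm_int_pow:
  assumes "length x = m" shows "x [^]\<^bsub>add_monoid (Bm m)\<^esub> (c::int) = map ((*) c) x"
proof (cases "c < 0")
  case True
  then have "x [^]\<^bsub>add_monoid (Bm m)\<^esub> c = \<ominus>\<^bsub>Bm m\<^esub> (x [^]\<^bsub>add_monoid (Bm m)\<^esub> nat (- c))"
    unfolding a_inv_def by (subst int_pow_def2) (simp only: if_True)
  also have "\<dots> = map uminus (map ((*) (int (nat (- c)))) x)"
    using assms by (simp only: Bm_nat_pow Bm_a_inv length_map)
  also have "\<dots> = map ((*) c) x"
    using True by (intro nth_equalityI) simp_all
  finally show ?thesis .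
next
  case False
  then have "x [^]\<^bsub>add_monoid (Bm m)\<^esub> c = x [^]\<^bsub>add_monoid (Bm m)\<^esub> nat c"
    by (subst int_pow_def2) (simp only: if_False)
  also have "\<dots> = map ((*) c) x"
    using False assms by (simp only: Bm_nat_pow) simp
  finally show ?thesis .
qed

lemma carrier_Bm_subset_subbrace:
  assumes m: "0 < m" and S: "subbrace (Bm m) S" and b: "bvec m \<in> S"
  shows "carrier (Bm m) \<subseteq> S"
proof -
  have add: "subgroup S (add_monoid (Bm m))"
    using S by (simp add: subbrace_def)
  have unit: "unit_vec m j \<in> S" for j
  proof (induction j)
    case 0 then show ?case using m b by (simp add: unit_vec_0)
  next
    case (Suc j) then show ?case
      using subbrace_star[OF S b] brace_star_bvec_unit_vec[OF m] by metis
  qed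
  have scaled: "map ((*) c) (unit_vec m j) \<in> S" for c j
  proof -
    have "unit_vec m j [^]\<^bsub>add_monoid (Bm m)\<^esub> c \<in> S"
      by (rule group.subgroup_int_pow_closed[OF left_brace_groups(1)[OF left_brace_Bm[OF m]] add unit])
    then show ?thesis by (simp only: Bm_int_pow length_unit_vec)
  qed
  have "vanishing_below m j \<subseteq> S" if "j \<le> m" for j
    using that
  proof (induction j rule: inc_induct)
    case base then show ?case
      using subgroup.one_closed[OF add] by (simp add: vanishing_below_top)
  next
    case (step j)
    show ?case
    proof
      fix xs assume xs: "xs \<in> vanishing_below m j"
      then have "xs[j := 0] \<in> vanishing_below m (Suc j)"
        by (auto simp: vanishing_below_def nth_list_update less_Suc_eq)
      then have "map2 (+) (xs[j := 0]) (map ((*) (xs ! j)) (unit_vec m j)) \<in> S"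
        using subgroup.m_closed[OF add _ scaled] step.IH by auto
      also have "map2 (+) (xs[j := 0]) (map ((*) (xs ! j)) (unit_vec m j)) = xs"
        using xs by (intro nth_equalityI) (auto simp: vanishing_below_def nth_list_update)
      finally show "xs \<in> S" .
    qed
  qed
  from this[of 0] show ?thesis by (simp add: vanishing_below_0)
qed

lemma subbrace_gen_Bm_bvec:
  "0 < m \<Longrightarrow> subbrace_gen (Bm m) (bvec m) = carrier (Bm m)"
  by (intro subbrace_gen_eqI subbrace_carrier left_brace_Bm carrier_Bm_subset_subbrace) simp_all

lemma brace_hom_from_Bm_unique:
  assumes m: "0 < m" and A: "left_brace A"
    and f: "brace_hom (Bm m) A f" and g: "brace_hom (Bm m) A g" and "f (bvec m) = g (bvec m)"
  shows "\<forall>x\<in>carrier (Bm m). f x = g x"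
  using carrier_Bm_subset_subbrace[OF m brace_hom_equalizer_subbrace[OF left_brace_Bm[OF m] A f g]]
    assms(5) m by auto

lemma brace_hom_from_Bm_image:
  assumes m: "0 < m" and A: "left_brace A" and f: "brace_hom (Bm m) A f"
  shows "f ` carrier (Bm m) = subbrace_gen A (f (bvec m))"
proof (rule subbrace_gen_eqI[symmetric])
  show "subbrace A (f ` carrier (Bm m))"
    by (rule brace_hom_image_subbrace[OF left_brace_Bm[OF m] A f])
  show "f (bvec m) \<in> f ` carrier (Bm m)"
    using m by simp
  fix S assume "subbrace A S" "f (bvec m) \<in> S"
  then show "f ` carrier (Bm m) \<subseteq> S"
    using carrier_Bm_subset_subbrace[OF m brace_hom_vimage_subbrace[OF left_brace_Bm[OF m] A f]] m
    by auto
qed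

section \<open>The universal property\<close>

text \<open>\<open>Bm_eval A a 0\<close> is the homomorphism \<open>B_m \<rightarrow> A\<close> sending \<open>b\<close> to \<open>a\<close>; it maps
  \<open>unit_vec m i\<close> to \<open>star_iter A a i\<close>.\<close>

primrec star_iter :: "'a ring \<Rightarrow> 'a \<Rightarrow> nat \<Rightarrow> 'a" where
  "star_iter A a 0 = a"
| "star_iter A a (Suc i) = brace_star A a (star_iter A a i)"

primrec Bm_eval :: "'a ring \<Rightarrow> 'a \<Rightarrow> nat \<Rightarrow> int list \<Rightarrow> 'a" where
  "Bm_eval A a i [] = \<zero>\<^bsub>A\<^esub>"
| "Bm_eval A a i (c # cs) = add_pow A c (star_iter A a i) \<oplus>\<^bsub>A\<^esub> Bm_eval A a (Suc i) cs"

locale Bm_target = brace_right_nil2 +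
  fixes m :: nat and a
  assumes brace_left_nil: "brace_left A (m + 1) = {\<zero>}"
    and a_closed: "a \<in> carrier A" and m_pos: "0 < m"
begin

lemma star_iter_closed [simp]: "star_iter A a i \<in> carrier A"
  by (induction i) (simp_all add: a_closed)

lemma star_iter_in_left_aux: "star_iter A a i \<in> left_aux A i"
  by (induction i) (simp_all add: a_closed star_in_star_set)

lemma star_iter_top: "star_iter A a m = \<zero>"
  using star_iter_in_left_aux[of m] brace_left_nil by (simp add: brace_left_def)

lemma lambda_star_iter: "brace_lambda A a (star_iter A a i) = star_iter A a i \<oplus> star_iter A a (Suc i)"
  using a_closed by (simp add: brace_star_eq_lambda a_minus_def a_comm r_neg2)

lemma lambda_star_iter_Suc_eq_id: "z \<in> carrier A \<Longrightarrow> brace_lambda A (star_iter A a (Suc i)) z = z"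
  using a_closed by (simp add: lambda_star_eq_id)

lemma Bm_eval_closed [simp]: "Bm_eval A a i cs \<in> carrier A"
  by (induction cs arbitrary: i) simp_all

lemma Bm_eval_add:
  "length cs = length ds \<Longrightarrow> Bm_eval A a i (map2 (+) cs ds) = Bm_eval A a i cs \<oplus> Bm_eval A a i ds"
proof (induction cs arbitrary: ds i)
  case Nil then show ?case by simp
next
  case (Cons c cs)
  then obtain d ds' where ds: "ds = d # ds'" by (cases ds) auto
  have "add_pow A (c + d) (star_iter A a i) = add_pow A c (star_iter A a i) \<oplus> add_pow A d (star_iter A a i)"
    by (simp add: add.int_pow_mult)
  then show ?case using Cons ds by (simp add: a_ac)
qed

lemma lambda_Bm_eval: "brace_lambda A a (Bm_eval A a i cs) = Bm_eval A a i cs \<oplus> Bm_eval A a (Suc i) cs"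
proof (induction cs arbitrary: i)
  case Nil then show ?case using a_closed by (simp add: lambda_zero_right)
next
  case (Cons c cs)
  have "brace_lambda A a (Bm_eval A a i (c # cs))
      = (add_pow A c (star_iter A a i) \<oplus> add_pow A c (star_iter A a (Suc i)))
        \<oplus> (Bm_eval A a (Suc i) cs \<oplus> Bm_eval A a (Suc (Suc i)) cs)"
    using a_closed Cons
    by (simp add: lambda_add lambda_int_pow lambda_star_iter add.int_pow_distrib del: star_iter.simps(2))
  then show ?case by (simp add: a_ac del: star_iter.simps(2))
qed

lemma Bm_eval_snoc:
  "Bm_eval A a i (cs @ [c]) = Bm_eval A a i cs \<oplus> add_pow A c (star_iter A a (i + length cs))"
  by (induction cs arbitrary: i) (simp_all add: a_ac del: star_iter.simps(2))

lemma Bm_eval_replicate_zero: "Bm_eval A a i (replicate k 0) = \<zero>"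
  by (induction k arbitrary: i) (simp_all add: add_pow_def del: star_iter.simps(2))

text \<open>The coefficient pushed out of the truncation is lost harmlessly, as \<open>star_iter A a m = 0\<close>.\<close>

lemma lambda_Bm_eval_eq_binom_mult_1:
  assumes t: "length t = m"
  shows "brace_lambda A a (Bm_eval A a 0 t) = Bm_eval A a 0 (binom_mult m 1 t)"
proof -
  have tne: "t \<noteq> []" using t m_pos by auto
  have "Bm_eval A a 1 t = Bm_eval A a 0 ((0 # butlast t) @ [last t])"
    using append_butlast_last_id[OF tne] by (simp add: add_pow_def del: star_iter.simps(2))
  also have "\<dots> = Bm_eval A a 0 (0 # butlast t)"
    using tne t m_pos by (simp only: Bm_eval_snoc) (simp add: star_iter_top add.int_pow_one a_closed del: star_iter.simps(2))
  also have "\<dots> = Bm_eval A a 1 (butlast t)"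
    by (simp add: add_pow_def del: star_iter.simps(2))
  finally have shift: "Bm_eval A a (Suc 0) t = Bm_eval A a (Suc 0) (butlast t)"
    by simp
  have "binom_mult m 1 t = map2 (+) t (0 # butlast t)"
    using t m_pos by (intro nth_equalityI)
      (auto simp: nth_binom_mult_1 nth_Cons nth_butlast split: nat.splits)
  then show ?thesis
    using t m_pos by (simp add: lambda_Bm_eval shift Bm_eval_add add_pow_def del: star_iter.simps(2))
qed

lemma lambda_int_pow_Bm_eval:
  assumes t: "length t = m"
  shows "brace_lambda A (add_pow A c a) (Bm_eval A a 0 t) = Bm_eval A a 0 (binom_mult m c t)"
  using t
proof (induction c arbitrary: t rule: int_induct[where k=0])
  case base then show ?case by (simp add: add_pow_def lambda_zero_left binom_mult_0)
next
  case (step1 c)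
  have "add_pow A (c + 1) a = add_pow A c a \<oplus> a"
    using a_closed add.int_pow_mult[of a c 1] by simp
  then have "brace_lambda A (add_pow A (c + 1) a) (Bm_eval A a 0 t)
      = brace_lambda A (add_pow A c a) (brace_lambda A a (Bm_eval A a 0 t))"
    using a_closed by (simp add: lambda_add_left)
  also have "\<dots> = Bm_eval A a 0 (binom_mult m c (binom_mult m 1 t))"
    using step1 by (simp add: lambda_Bm_eval_eq_binom_mult_1)
  finally show ?case by (simp add: binom_mult_binom_mult)
next
  case (step2 c)
  have "add_pow A c a = add_pow A (c - 1) a \<oplus> a"
    using a_closed add.int_pow_mult[of a "c - 1" 1] by simp
  moreover have "Bm_eval A a 0 t = brace_lambda A a (Bm_eval A a 0 (binom_mult m (-1) t))"
    using step2 by (simp add: lambda_Bm_eval_eq_binom_mult_1 binom_mult_binom_mult binom_mult_0)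
  ultimately have "brace_lambda A (add_pow A (c - 1) a) (Bm_eval A a 0 t)
      = brace_lambda A (add_pow A c a) (Bm_eval A a 0 (binom_mult m (-1) t))"
    using a_closed by (simp add: lambda_add_left)
  also have "\<dots> = Bm_eval A a 0 (binom_mult m (c - 1) t)"
    using step2 by (simp add: binom_mult_binom_mult)
  finally show ?case .
qed

lemma lambda_Bm_eval_Suc_eq_id: "z \<in> carrier A \<Longrightarrow> brace_lambda A (Bm_eval A a (Suc i) cs) z = z"
proof (induction cs arbitrary: i)
  case Nil then show ?case by (simp add: lambda_zero_left)
next
  case (Cons c cs)
  have "brace_lambda A (add_pow A c (star_iter A a (Suc i))) z = z"
    using Cons.prems lambda_star_iter_Suc_eq_id
    by (intro lambda_int_pow_eq_id) (simp_all del: star_iter.simps(2))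
  then show ?case using Cons by (simp add: lambda_add_left del: star_iter.simps(2))
qed

text \<open>The summands \<open>star_iter A a (Suc i)\<close> of \<open>Bm_eval A a 0 xs\<close> act trivially.\<close>

lemma lambda_Bm_eval_eq:
  assumes "length xs = m" "z \<in> carrier A"
  shows "brace_lambda A (Bm_eval A a 0 xs) z = brace_lambda A (add_pow A (xs ! 0) a) z"
proof -
  obtain c cs where "xs = c # cs" using assms(1) m_pos by (cases xs) auto
  then show ?thesis
    using assms a_closed by (simp add: lambda_add_left lambda_Bm_eval_Suc_eq_id del: star_iter.simps(2))
qed

lemma brace_hom_Bm_eval: "brace_hom (Bm m) A (Bm_eval A a 0)"
  unfolding brace_hom_def
proof (intro conjI ballI)
  show "Bm_eval A a 0 ` carrier (Bm m) \<subseteq> carrier A" by auto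
  fix x y assume "x \<in> carrier (Bm m)" "y \<in> carrier (Bm m)"
  then have l: "length x = m" "length y = m" by auto
  then show "Bm_eval A a 0 (x \<oplus>\<^bsub>Bm m\<^esub> y) = Bm_eval A a 0 x \<oplus> Bm_eval A a 0 y"
    by (simp add: Bm_eval_add)
  have "Bm_eval A a 0 (x \<otimes>\<^bsub>Bm m\<^esub> y) = Bm_eval A a 0 x \<oplus> Bm_eval A a 0 (binom_mult m (x ! 0) y)"
    using l by (simp add: Bm_mul_eq Bm_eval_add del: Bm_eval.simps)
  also have "\<dots> = Bm_eval A a 0 x \<oplus> brace_lambda A (Bm_eval A a 0 x) (Bm_eval A a 0 y)"
    using l by (simp add: lambda_Bm_eval_eq lambda_int_pow_Bm_eval del: Bm_eval.simps)
  also have "\<dots> = Bm_eval A a 0 x \<otimes> Bm_eval A a 0 y"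
    by (simp add: mult_eq_add_lambda)
  finally show "Bm_eval A a 0 (x \<otimes>\<^bsub>Bm m\<^esub> y) = Bm_eval A a 0 x \<otimes> Bm_eval A a 0 y" .
qed

lemma Bm_eval_bvec: "Bm_eval A a 0 (bvec m) = a"
  using a_closed by (simp add: bvec_def Bm_eval_replicate_zero)

end

lemma Bm_universal:
  fixes A :: "'a ring"
  assumes m: "0 < m" and A: "left_brace A" and A3: "brace_right A 3 = {\<zero>\<^bsub>A\<^esub>}"
    and Am: "brace_left A (m + 1) = {\<zero>\<^bsub>A\<^esub>}" and a: "a \<in> carrier A"
  shows "\<exists>f. brace_hom (Bm m) A f \<and> f (bvec m) = a
           \<and> (\<forall>g. brace_hom (Bm m) A g \<and> g (bvec m) = a \<longrightarrow> (\<forall>x\<in>carrier (Bm m). g x = f x))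
           \<and> f ` carrier (Bm m) = subbrace_gen A a"
proof -
  interpret brace A by (rule left_brace_imp_brace[OF A])
  interpret brace_right_nil2 A by unfold_locales (rule A3)
  interpret Bm_target A m a by unfold_locales (use Am a m in auto)
  have f: "brace_hom (Bm m) A (Bm_eval A a 0)" by (rule brace_hom_Bm_eval)
  show ?thesis
  proof (intro exI[of _ "Bm_eval A a 0"] conjI allI impI)
    show "Bm_eval A a 0 (bvec m) = a" by (rule Bm_eval_bvec)
    show "Bm_eval A a 0 ` carrier (Bm m) = subbrace_gen A a"
      using brace_hom_from_Bm_image[OF m A f] by (simp add: Bm_eval_bvec)
    fix g assume "brace_hom (Bm m) A g \<and> g (bvec m) = a"
    then show "\<forall>x\<in>carrier (Bm m). g x = Bm_eval A a 0 x"
      using brace_hom_from_Bm_unique[OF m A _ f] by (simp add: Bm_eval_bvec)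
  qed (rule f)
qed

theorem theoremE:
  fixes m :: nat
  assumes "m \<ge> 2"
  shows "left_brace (Bm m)
    \<and> brace_right (Bm m) 3 = {\<zero>\<^bsub>Bm m\<^esub>}
    \<and> brace_left (Bm m) (m + 1) = {\<zero>\<^bsub>Bm m\<^esub>}
    \<and> brace_left (Bm m) m \<noteq> {\<zero>\<^bsub>Bm m\<^esub>}
    \<and> subbrace_gen (Bm m) (bvec m) = carrier (Bm m)
    \<and> (\<forall>(A :: 'a ring) a.
          left_brace A \<and> brace_right A 3 = {\<zero>\<^bsub>A\<^esub>} \<and> brace_left A (m + 1) = {\<zero>\<^bsub>A\<^esub>}
          \<and> a \<in> carrier A \<longrightarrow>
          (\<exists>f. brace_hom (Bm m) A f \<and> f (bvec m) = a
               \<and> (\<forall>g. brace_hom (Bm m) A g \<and> g (bvec m) = a \<longrightarrow>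
                      (\<forall>x\<in>carrier (Bm m). g x = f x))
               \<and> f ` carrier (Bm m) = subbrace_gen A a))"
proof (intro conjI allI impI)
  have m: "0 < m" using assms by simp
  show "left_brace (Bm m)" by (rule left_brace_Bm[OF m])
  show "brace_right (Bm m) 3 = {\<zero>\<^bsub>Bm m\<^esub>}" by (rule brace_right_Bm_3[OF m])
  show "brace_left (Bm m) (m + 1) = {\<zero>\<^bsub>Bm m\<^esub>}" by (rule brace_left_Bm_top)
  show "brace_left (Bm m) m \<noteq> {\<zero>\<^bsub>Bm m\<^esub>}" by (rule brace_left_Bm_ne[OF m])
  show "subbrace_gen (Bm m) (bvec m) = carrier (Bm m)" by (rule subbrace_gen_Bm_bvec[OF m])
  fix A :: "'a ring" and a
  assume "left_brace A \<and> brace_right A 3 = {\<zero>\<^bsub>A\<^esub>} \<and> brace_left A (m + 1) = {\<zero>\<^bsub>A\<^esub>}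
    \<and> a \<in> carrier A"
  then show "\<exists>f. brace_hom (Bm m) A f \<and> f (bvec m) = a
      \<and> (\<forall>g. brace_hom (Bm m) A g \<and> g (bvec m) = a \<longrightarrow> (\<forall>x\<in>carrier (Bm m). g x = f x))
      \<and> f ` carrier (Bm m) = subbrace_gen A a"
    by (elim conjE) (rule Bm_universal[OF m])
qed

end
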